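(* Let $G$ be a connected $K_{1,4}$-free graph with no Hamiltonian path, and let $T$ be a spanning tree of $G$ satisfying (C1) and (C2). Let $b,r\in B(T)$ be such that $V(P_T[b,r])\cap B(T)=\{b,r\}$. Then every vertex $x\in V(P_T[b,r])\setminus\{b,r\}$ is adjacent in $G$ to at most one vertex of $L(T)$.
   Context: All graphs are finite and simple. A graph is $K_{1,4}$-free if it has no induced subgraph isomorphic to $K_{1,4}$. For a tree $T$, $L(T)$ is the set of leaves (degree-one vertices) and $B(T)$ the set of branch vertices (degree at least three); $P_T[u,v]$ is the unique path in $T$ between $u$ and $v$. Since $G$ has no Hamiltonian path, every spanning tree of $G$ has a branch vertex. Reducible stem: for a tree $T$ with $B(T)\neq\emptyset$ and each leaf $x\in L(T)$, let $y_x\in B(T)$ be the branch vertex such that $P_T[x,y_x]$ contains no branch vertex other than $y_x$; deleting $V(P_T[x,y_x])\setminus\{y_x\}$ from $T$ for all $x\in L(T)$ yields a subtree $R\_Stem(T)$. Condition (C1): $|L(T)|$ is minimum among all spanning trees of $G$. Condition (C2): subject to (C1), $|V(R\_Stem(T))|$ is maximum. *)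

theory Defs
  imports Main
begin

definition simple_graph :: "'a set \<Rightarrow> 'a set set \<Rightarrow> bool" where
  "simple_graph V E \<longleftrightarrow> finite V \<and>
     (\<forall>e\<in>E. \<exists>u v. u \<noteq> v \<and> u \<in> V \<and> v \<in> V \<and> e = {u, v})"

definition is_path :: "'a set set \<Rightarrow> 'a list \<Rightarrow> bool" where
  "is_path F p \<longleftrightarrow> p \<noteq> [] \<and> distinct p \<and>
     (\<forall>i. Suc i < length p \<longrightarrow> {p ! i, p ! Suc i} \<in> F)"

definition connected_on :: "'a set \<Rightarrow> 'a set set \<Rightarrow> bool" where
  "connected_on V F \<longleftrightarrow>
     (\<forall>u\<in>V. \<forall>v\<in>V. \<exists>p. is_path F p \<and> hd p = u \<and> last p = v)"

definition has_cycle :: "'a set set \<Rightarrow> bool" where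
  "has_cycle F \<longleftrightarrow> (\<exists>p. is_path F p \<and> length p \<ge> 3 \<and> {last p, hd p} \<in> F)"

definition spanning_tree :: "'a set \<Rightarrow> 'a set set \<Rightarrow> 'a set set \<Rightarrow> bool" where
  "spanning_tree V E T \<longleftrightarrow> T \<subseteq> E \<and> connected_on V T \<and> \<not> has_cycle T"

definition hamiltonian_path :: "'a set \<Rightarrow> 'a set set \<Rightarrow> 'a list \<Rightarrow> bool" where
  "hamiltonian_path V E p \<longleftrightarrow> is_path E p \<and> set p = V"

definition K14_free :: "'a set \<Rightarrow> 'a set set \<Rightarrow> bool" where
  "K14_free V E \<longleftrightarrow> \<not> (\<exists>c\<in>V. \<exists>S\<subseteq>V. card S = 4 \<and>
      (\<forall>x\<in>S. {c, x} \<in> E) \<and> (\<forall>x\<in>S. \<forall>y\<in>S. x \<noteq> y \<longrightarrow> {x, y} \<notin> E))"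

definition tdeg :: "'a set set \<Rightarrow> 'a \<Rightarrow> nat" where
  "tdeg T v = card {e\<in>T. v \<in> e}"

definition leaves :: "'a set \<Rightarrow> 'a set set \<Rightarrow> 'a set" where
  "leaves V T = {v\<in>V. tdeg T v = 1}"

definition branches :: "'a set \<Rightarrow> 'a set set \<Rightarrow> 'a set" where
  "branches V T = {v\<in>V. tdeg T v \<ge> 3}"

text \<open>Vertex set of the (unique) path P_T[u,v] in the tree T.\<close>
definition tpath :: "'a set set \<Rightarrow> 'a \<Rightarrow> 'a \<Rightarrow> 'a set" where
  "tpath T u v = set (THE p. is_path T p \<and> hd p = u \<and> last p = v)"

definition stem_removed :: "'a set \<Rightarrow> 'a set set \<Rightarrow> 'a \<Rightarrow> 'a set" where
  "stem_removed V T x = (let y = (THE y. y \<in> branches V T \<and> tpath T x y \<inter> branches V T = {y})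
                          in tpath T x y - {y})"

definition R_stem_verts :: "'a set \<Rightarrow> 'a set set \<Rightarrow> 'a set" where
  "R_stem_verts V T = V - (\<Union>x\<in>leaves V T. stem_removed V T x)"

definition C1 :: "'a set \<Rightarrow> 'a set set \<Rightarrow> 'a set set \<Rightarrow> bool" where
  "C1 V E T \<longleftrightarrow> spanning_tree V E T \<and>
     (\<forall>T'. spanning_tree V E T' \<longrightarrow> card (leaves V T) \<le> card (leaves V T'))"

definition C2 :: "'a set \<Rightarrow> 'a set set \<Rightarrow> 'a set set \<Rightarrow> bool" where
  "C2 V E T \<longleftrightarrow> C1 V E T \<and>
     (\<forall>T'. C1 V E T' \<longrightarrow> card (R_stem_verts V T') \<le> card (R_stem_verts V T))"

end

theory Submission
  imports Defs
begin

text \<open>Suppose an interior vertex x of the path from b to r had two leaf neighbours u, v in G, and let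
  x1, x2 be its neighbours on the path. As G is K_{1,4}-free, two of x1, x2, u, v are adjacent, and each
  case yields a tree that violates (C1) or (C2). Two leaves are never adjacent: the tree path between them
  has an inner branch vertex (otherwise it would be a Hamiltonian path), and adding the edge uv while
  cutting the tree at that branch vertex loses a leaf. If u is adjacent to x1, detaching u from its tree
  neighbour z and letting it subdivide the edge x x1 loses a leaf unless z had degree 2; in that case the
  number of leaves is unchanged but u enters the reducible stem, contradicting (C2). If x1 x2 is an edge,
  replacing x by this edge on the path and hanging x on u keeps the number of leaves and makes x a leaf
  adjacent to the leaf v, which is the first case again.\<close>

section \<open>Paths and trees\<close>

definition adj :: "'a set set \<Rightarrow> 'a \<Rightarrow> 'a \<Rightarrow> bool" where
  "adj S x y \<longleftrightarrow> {x, y} \<in> S"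

lemma symp_adj: "symp (adj S)"
  by (auto intro: sympI simp: adj_def insert_commute)

lemma reach_sym: "(adj S)\<^sup>*\<^sup>* x y \<Longrightarrow> (adj S)\<^sup>*\<^sup>* y x"
  by (rule sympD[OF symp_rtranclp[OF symp_adj]])

lemma edge_sym: "{a, b} \<in> S \<Longrightarrow> {b, a} \<in> S"
  by (simp add: insert_commute)

lemma is_pathD: "is_path S p \<Longrightarrow> Suc i < length p \<Longrightarrow> {p ! i, p ! Suc i} \<in> S"
  by (simp add: is_path_def)

lemma path_edge_sym: "is_path S p \<Longrightarrow> Suc i < length p \<Longrightarrow> {p ! Suc i, p ! i} \<in> S"
  by (rule edge_sym[OF is_pathD])

lemma path_mono: "is_path S p \<Longrightarrow> S \<subseteq> S' \<Longrightarrow> is_path S' p"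
  unfolding is_path_def by blast

lemma path_take: "is_path S p \<Longrightarrow> 0 < k \<Longrightarrow> is_path S (take k p)"
  unfolding is_path_def by (auto simp: distinct_take)

lemma path_tl: "is_path S (a # p) \<Longrightarrow> p \<noteq> [] \<Longrightarrow> is_path S p"
  unfolding is_path_def by (metis Suc_less_eq distinct.simps(2) length_Cons nth_Cons_Suc)

lemma path_cons: "is_path S p \<Longrightarrow> a \<notin> set p \<Longrightarrow> {a, hd p} \<in> S \<Longrightarrow> is_path S (a # p)"
  unfolding is_path_def
proof (intro conjI allI impI)
  fix i assume h: "p \<noteq> [] \<and> distinct p \<and> (\<forall>i. Suc i < length p \<longrightarrow> {p ! i, p ! Suc i} \<in> S)"
    "a \<notin> set p" "{a, hd p} \<in> S" "Suc i < length (a # p)"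
  show "{(a # p) ! i, (a # p) ! Suc i} \<in> S"
  proof (cases i)
    case 0 then show ?thesis using h by (simp add: hd_conv_nth)
  next
    case (Suc j) then show ?thesis using h by simp
  qed
qed auto

lemma path_snoc: "is_path S p \<Longrightarrow> z \<notin> set p \<Longrightarrow> {last p, z} \<in> S \<Longrightarrow> is_path S (p @ [z])"
  unfolding is_path_def
proof (intro conjI allI impI)
  fix i assume h: "p \<noteq> [] \<and> distinct p \<and> (\<forall>i. Suc i < length p \<longrightarrow> {p ! i, p ! Suc i} \<in> S)"
    "z \<notin> set p" "{last p, z} \<in> S" "Suc i < length (p @ [z])"
  show "{(p @ [z]) ! i, (p @ [z]) ! Suc i} \<in> S"
  proof (cases "Suc i < length p")
    case True then show ?thesis using h by (simp add: nth_append)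
  next
    case False
    then have "Suc i = length p" using h by simp
    then have "i = length p - 1" by simp
    then show ?thesis using h \<open>Suc i = length p\<close> by (simp add: nth_append last_conv_nth)
  qed
qed auto

lemma path_reach_nth: "is_path S p \<Longrightarrow> i < length p \<Longrightarrow> (adj S)\<^sup>*\<^sup>* (hd p) (p ! i)"
proof (induction i)
  case 0 then show ?case by (simp add: hd_conv_nth is_path_def)
next
  case (Suc i)
  then have "adj S (p ! i) (p ! Suc i)" by (simp add: adj_def is_path_def)
  with Suc show ?case by (meson Suc_lessD rtranclp.rtrancl_into_rtrancl)
qed

lemma path_reach: "is_path S p \<Longrightarrow> (adj S)\<^sup>*\<^sup>* (hd p) (last p)"
  using path_reach_nth[of S p "length p - 1"] by (simp add: is_path_def last_conv_nth)

lemma reach_path: "(adj S)\<^sup>*\<^sup>* a b \<Longrightarrow> \<exists>p. is_path S p \<and> hd p = a \<and> last p = b"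
proof (induction rule: rtranclp_induct)
  case base then show ?case by (intro exI[of _ "[a]"]) (simp add: is_path_def)
next
  case (step y z)
  then obtain p where p: "is_path S p" "hd p = a" "last p = y" by blast
  show ?case
  proof (cases "z \<in> set p")
    case True
    then obtain k where k: "k < length p" "p ! k = z" by (meson in_set_conv_nth)
    have "is_path S (take (Suc k) p)" using p path_take by blast
    moreover have "hd (take (Suc k) p) = a" using p k
      by (metis hd_take zero_less_Suc)
    moreover have "last (take (Suc k) p) = z" using k
      by (simp add: take_Suc_conv_app_nth)
    ultimately show ?thesis by blast
  next
    case False
    have "is_path S (p @ [z])" using p False step(2) path_snoc by (fastforce simp: adj_def)
    moreover have "hd (p @ [z]) = a" using p by (simp add: is_path_def)
    ultimately show ?thesis by (intro exI[of _ "p @ [z]"]) simp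
  qed
qed

lemma connected_on_reach: "connected_on V S \<longleftrightarrow> (\<forall>u\<in>V. \<forall>v\<in>V. (adj S)\<^sup>*\<^sup>* u v)"
  unfolding connected_on_def using path_reach reach_path by metis

lemma reach_segment:
  assumes "is_path S p" "i \<le> k" "k < length p" "\<And>m. i \<le> m \<Longrightarrow> m < k \<Longrightarrow> {p ! m, p ! Suc m} \<in> S'"
  shows "(adj S')\<^sup>*\<^sup>* (p ! i) (p ! k)"
  using assms(2,3,4)
proof (induction k)
  case 0 then show ?case by simp
next
  case (Suc k)
  show ?case
  proof (cases "i = Suc k")
    case False
    then have "(adj S')\<^sup>*\<^sup>* (p ! i) (p ! k)" using Suc by simp
    moreover have "adj S' (p ! k) (p ! Suc k)" using Suc.prems False by (simp add: adj_def)
    ultimately show ?thesis by (rule rtranclp.rtrancl_into_rtrancl)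
  qed simp
qed

lemma path_edge_inj:
  assumes "is_path S p" "Suc m < length p" "Suc j < length p" "{p ! m, p ! Suc m} = {p ! j, p ! Suc j}"
  shows "m = j"
proof -
  have d: "distinct p" using assms(1) by (simp add: is_path_def)
  from assms(4) have "(p ! m = p ! j \<and> p ! Suc m = p ! Suc j) \<or> (p ! m = p ! Suc j \<and> p ! Suc m = p ! j)"
    by (auto simp: doubleton_eq_iff)
  then show ?thesis
  proof
    assume "p ! m = p ! j \<and> p ! Suc m = p ! Suc j"
    then show ?thesis using d assms(2,3) nth_eq_iff_index_eq by (metis Suc_lessD)
  next
    assume h: "p ! m = p ! Suc j \<and> p ! Suc m = p ! j"
    then have "m = Suc j" using d assms(2,3) nth_eq_iff_index_eq by (metis Suc_lessD)
    moreover have "Suc m = j" using h d assms(2,3) nth_eq_iff_index_eq by (metis Suc_lessD)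
    ultimately show ?thesis by simp
  qed
qed

lemma path_closing_ne:
  assumes "is_path S p" "length p \<ge> 3" "Suc m < length p"
  shows "{p ! m, p ! Suc m} \<noteq> {last p, hd p}"
proof
  assume h: "{p ! m, p ! Suc m} = {last p, hd p}"
  have d: "distinct p" using assms(1) by (simp add: is_path_def)
  have ne: "p \<noteq> []" using assms(2) by auto
  have l: "last p = p ! (length p - 1)" "hd p = p ! 0" using ne by (auto simp: last_conv_nth hd_conv_nth)
  from h have "(p ! m = last p \<and> p ! Suc m = hd p) \<or> (p ! m = hd p \<and> p ! Suc m = last p)"
    by (auto simp: doubleton_eq_iff)
  then show False
  proof
    assume "p ! m = last p \<and> p ! Suc m = hd p"
    then have "Suc m = 0" using d assms l nth_eq_iff_index_eq by (metis length_greater_0_conv ne)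
    then show False by simp
  next
    assume a: "p ! m = hd p \<and> p ! Suc m = last p"
    then have "Suc m = length p - 1" using d assms l nth_eq_iff_index_eq
      by (metis diff_less length_greater_0_conv ne zero_less_one)
    moreover have "m = 0" using a d assms l nth_eq_iff_index_eq by (metis Suc_lessD length_greater_0_conv ne)
    ultimately show False using assms(2) by simp
  qed
qed

lemma simple_graph_finite: "simple_graph V S \<Longrightarrow> finite S"
proof -
  assume a: "simple_graph V S"
  have "S \<subseteq> Pow V"
  proof
    fix e assume "e \<in> S"
    then obtain u v where "u \<in> V" "v \<in> V" "e = {u, v}" using a unfolding simple_graph_def by blast
    then show "e \<in> Pow V" by simp
  qed
  moreover have "finite (Pow V)" using a unfolding simple_graph_def by simp
  ultimately show ?thesis by (rule finite_subset)
qed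

lemma simple_graph_edgeD: "simple_graph V S \<Longrightarrow> {a, c} \<in> S \<Longrightarrow> a \<noteq> c \<and> a \<in> V \<and> c \<in> V"
proof -
  assume "simple_graph V S" "{a, c} \<in> S"
  then obtain u v where uv: "u \<noteq> v" "u \<in> V" "v \<in> V" "{a, c} = {u, v}"
    unfolding simple_graph_def by blast
  then show ?thesis by (auto simp: doubleton_eq_iff)
qed

lemma simple_graph_mono: "simple_graph V S \<Longrightarrow> S' \<subseteq> S \<Longrightarrow> simple_graph V S'"
  unfolding simple_graph_def by blast

lemma path_set_V:
  assumes "simple_graph V S" "is_path S p" "hd p \<in> V"
  shows "set p \<subseteq> V"
proof -
  have "p ! i \<in> V" if "i < length p" for i
    using that
  proof (induction i)
    case 0 then show ?case using assms(3) by (simp add: hd_conv_nth)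
  next
    case (Suc i)
    then show ?case using simple_graph_edgeD[OF assms(1) is_pathD[OF assms(2)]] by simp
  qed
  then show ?thesis by (auto simp: in_set_conv_nth)
qed

lemma has_cycle_mono: "has_cycle S \<Longrightarrow> S \<subseteq> S' \<Longrightarrow> has_cycle S'"
proof -
  assume a: "has_cycle S" "S \<subseteq> S'"
  then obtain p where p: "is_path S p" "length p \<ge> 3" "{last p, hd p} \<in> S" unfolding has_cycle_def by blast
  have "is_path S' p" using path_mono[OF p(1) a(2)] .
  moreover have "{last p, hd p} \<in> S'" using p(3) a(2) by blast
  ultimately show ?thesis using p(2) unfolding has_cycle_def by blast
qed

lemma acyclic_edge_bridge:
  assumes nc: "\<not> has_cycle S" and ac: "{a, c} \<in> S" "a \<noteq> c"
  shows "\<not> (adj (S - {{a, c}}))\<^sup>*\<^sup>* c a"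
proof
  assume "(adj (S - {{a, c}}))\<^sup>*\<^sup>* c a"
  then obtain r where r: "is_path (S - {{a, c}}) r" "hd r = c" "last r = a"
    by (meson reach_path)
  have "r \<noteq> []" using r(1) by (simp add: is_path_def)
  then have "length r \<ge> 2" using r(2,3) ac(2) by (cases r; cases "tl r") auto
  then consider "length r = 2" | "length r \<ge> 3" by linarith
  then show False
  proof cases
    case 1
    then have "{c, a} \<in> S - {{a, c}}"
      using is_pathD[OF r(1), of 0] r(2,3) \<open>r \<noteq> []\<close> by (simp add: hd_conv_nth last_conv_nth)
    then show False by (simp add: insert_commute)
  next
    case 2
    moreover have "{last r, hd r} \<in> S" using r ac(1) by (simp add: insert_commute)
    ultimately have "has_cycle S"
      using path_mono[OF r(1)] unfolding has_cycle_def by blast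
    then show False using nc by simp
  qed
qed

lemma path_avoid_vertex: "is_path S p \<Longrightarrow> a \<notin> set p \<Longrightarrow> a \<in> e \<Longrightarrow> is_path (S - {e}) p"
  unfolding is_path_def by (auto dest: nth_mem[of _ p] Suc_lessD)

lemma acyclic_path_unique:
  assumes nc: "\<not> has_cycle S"
  shows "is_path S p \<Longrightarrow> is_path S q \<Longrightarrow> hd p = hd q \<Longrightarrow> last p = last q \<Longrightarrow> p = q"
proof (induction p arbitrary: q)
  case Nil then show ?case by (simp add: is_path_def)
next
  case (Cons a p')
  obtain q' where q: "q = a # q'" using Cons.prems(2,3) by (cases q) (auto simp: is_path_def)
  have dp: "a \<notin> set p'" and dq: "a \<notin> set q'" using Cons.prems(1,2) q by (auto simp: is_path_def)
  have "p' = [] \<longleftrightarrow> q' = []" using Cons.prems(4) q dp dq by (metis last.simps last_in_set)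
  moreover have "p' \<noteq> [] \<Longrightarrow> p' = q'"
  proof -
    assume pne: "p' \<noteq> []"
    then have qne: "q' \<noteq> []" using \<open>p' = [] \<longleftrightarrow> q' = []\<close> by blast
    have pp: "is_path S p'" using path_tl[OF Cons.prems(1) pne] .
    have qp: "is_path S q'" using path_tl[of S a q'] Cons.prems(2) q qne by simp
    have ll: "last p' = last q'" using Cons.prems(4) q pne qne by simp
    show "p' = q'"
    proof (rule Cons.IH[OF pp qp _ ll], rule ccontr)
      let ?c = "hd p'" and ?d = "hd q'"
      assume cd: "?c \<noteq> ?d"
      have ac: "{a, ?c} \<in> S" and ad: "{a, ?d} \<in> S"
        using is_pathD[OF Cons.prems(1), of 0] is_pathD[OF Cons.prems(2), of 0] q pne qne
        by (auto simp: hd_conv_nth)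
      let ?S = "S - {{a, ?c}}"
      have "(adj ?S)\<^sup>*\<^sup>* ?c (last p')" using path_reach[OF path_avoid_vertex[OF pp dp]] by simp
      moreover have "(adj ?S)\<^sup>*\<^sup>* (last q') ?d"
        using reach_sym[OF path_reach[OF path_avoid_vertex[OF qp dq]]] by simp
      moreover have "adj ?S ?d a" using ad cd by (auto simp: adj_def doubleton_eq_iff insert_commute)
      ultimately have "(adj ?S)\<^sup>*\<^sup>* ?c a" using ll by (metis rtranclp.rtrancl_into_rtrancl rtranclp_trans)
      moreover have "a \<noteq> ?c" using dp pne by auto
      ultimately show False using acyclic_edge_bridge[OF nc ac] by blast
    qed
  qed
  ultimately show ?case using q by auto
qed

definition is_tree :: "'a set \<Rightarrow> 'a set set \<Rightarrow> bool" where
  "is_tree V S \<longleftrightarrow> simple_graph V S \<and> connected_on V S \<and> \<not> has_cycle S"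

definition tp :: "'a set set \<Rightarrow> 'a \<Rightarrow> 'a \<Rightarrow> 'a list" where
  "tp S u v = (THE p. is_path S p \<and> hd p = u \<and> last p = v)"

lemma tpath_tp: "tpath S u v = set (tp S u v)"
  by (simp add: tpath_def tp_def)

lemma spanning_tree_is_tree: "simple_graph V E \<Longrightarrow> spanning_tree V E S \<Longrightarrow> is_tree V S"
  unfolding spanning_tree_def is_tree_def using simple_graph_mono by blast

lemma is_tree_spanning_tree: "is_tree V S \<Longrightarrow> S \<subseteq> E \<Longrightarrow> spanning_tree V E S"
  unfolding is_tree_def spanning_tree_def by blast

lemma tree_simple_graph: "is_tree V S \<Longrightarrow> simple_graph V S"
  unfolding is_tree_def by simp

lemma tree_finite: "is_tree V S \<Longrightarrow> finite S"
  by (rule simple_graph_finite[OF tree_simple_graph])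

lemma tp_unique:
  assumes "is_tree V S" "is_path S p" "hd p = u" "last p = v"
  shows "tp S u v = p"
  unfolding tp_def
proof (rule the_equality)
  fix q assume "is_path S q \<and> hd q = u \<and> last q = v"
  then show "q = p" using acyclic_path_unique[of S q p] assms by (simp add: is_tree_def)
qed (use assms in simp)

lemma tp_path:
  assumes "is_tree V S" "u \<in> V" "v \<in> V"
  shows "is_path S (tp S u v)" "hd (tp S u v) = u" "last (tp S u v) = v"
proof -
  have "connected_on V S" using assms(1) by (simp add: is_tree_def)
  then obtain p where p: "is_path S p" "hd p = u" "last p = v"
    using assms(2,3) unfolding connected_on_def by blast
  then show "is_path S (tp S u v)" "hd (tp S u v) = u" "last (tp S u v) = v"
    using tp_unique[OF assms(1) p] by simp_all
qed

lemma has_cycle_insert_reach: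
  assumes nc: "\<not> has_cycle F" and c: "has_cycle (insert {a, c} F)"
  shows "(adj F)\<^sup>*\<^sup>* a c"
proof -
  define e where "e = {a, c}"
  obtain p where p: "is_path (insert e F) p" "length p \<ge> 3" "{last p, hd p} \<in> insert e F"
    using c unfolding has_cycle_def e_def by blast
  define n where "n = length p"
  have ne: "p \<noteq> []" using p(2) by auto
  have l: "last p = p ! (n - 1)" "hd p = p ! 0" using ne by (auto simp: last_conv_nth hd_conv_nth n_def)
  show ?thesis
  proof (cases "\<exists>k. Suc k < n \<and> {p ! k, p ! Suc k} \<notin> F")
    case False
    then have pf: "is_path F p" using p(1) unfolding is_path_def n_def by blast
    have "{last p, hd p} \<notin> F" using nc pf p(2) has_cycle_def by blast
    then have ee: "{last p, hd p} = e" using p(3) by blast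
    have "(adj F)\<^sup>*\<^sup>* (p ! 0) (p ! (n - 1))"
      using reach_segment[OF pf, of 0 "n - 1" F] False ne n_def by auto
    then have "(adj F)\<^sup>*\<^sup>* (hd p) (last p)" using l by simp
    then show ?thesis using ee e_def reach_sym by (auto simp: doubleton_eq_iff)
  next
    case True
    then obtain k where k: "Suc k < n" "{p ! k, p ! Suc k} \<notin> F" by blast
    have ek: "{p ! k, p ! Suc k} = e" using k p(1) is_pathD n_def by blast
    have oth: "\<forall>m. Suc m < n \<and> m \<noteq> k \<longrightarrow> {p ! m, p ! Suc m} \<in> F"
    proof (intro allI impI)
      fix m assume m: "Suc m < n \<and> m \<noteq> k"
      have "{p ! m, p ! Suc m} \<in> insert e F" using p(1) m is_pathD n_def by blast
      moreover have "{p ! m, p ! Suc m} \<noteq> e"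
        using path_edge_inj[OF p(1), of m k] m k ek n_def by auto
      ultimately show "{p ! m, p ! Suc m} \<in> F" by blast
    qed
    have "{last p, hd p} \<noteq> e" using path_closing_ne[OF p(1) p(2), of k] k ek n_def by simp
    then have cl: "{last p, hd p} \<in> F" using p(3) by blast
    have r1: "(adj F)\<^sup>*\<^sup>* (p ! Suc k) (p ! (n - 1))"
      using reach_segment[OF p(1), of "Suc k" "n - 1" F] oth k n_def by auto
    have r2: "adj F (p ! (n - 1)) (p ! 0)" using cl l by (simp add: adj_def)
    have r3: "(adj F)\<^sup>*\<^sup>* (p ! 0) (p ! k)"
      using reach_segment[OF p(1), of 0 k F] oth k n_def by auto
    have "(adj F)\<^sup>*\<^sup>* (p ! Suc k) (p ! k)"
      using r1 r2 r3 by (meson rtranclp.rtrancl_into_rtrancl rtranclp_trans)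
    then show ?thesis using ek e_def reach_sym by (auto simp: doubleton_eq_iff)
  qed
qed

lemma exchange_acyclic:
  assumes nc: "\<not> has_cycle S" and p: "is_path S p" "hd p = a" "last p = c"
    and j: "Suc j < length p"
  shows "\<not> has_cycle (insert {a, c} (S - {{p ! j, p ! Suc j}}))"
proof
  let ?f = "{p ! j, p ! Suc j}"
  assume hc: "has_cycle (insert {a, c} (S - {?f}))"
  have "\<not> has_cycle (S - {?f})" using nc has_cycle_mono[of "S - {?f}" S] by blast
  then have "(adj (S - {?f}))\<^sup>*\<^sup>* a c" by (rule has_cycle_insert_reach[OF _ hc])
  then obtain q where q: "is_path (S - {?f}) q" "hd q = a" "last q = c" by (meson reach_path)
  have "q = p" using acyclic_path_unique[OF nc path_mono[OF q(1)] p(1)] q p by simp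
  then show False using is_pathD[OF q(1), of j] j by simp
qed

text \<open>The removed edge is bridged by the path around it through the new edge.\<close>
lemma exchange_connected:
  assumes con: "connected_on V S" and p: "is_path S p" "hd p = a" "last p = c"
    and j: "Suc j < length p"
  shows "connected_on V (insert {a, c} (S - {{p ! j, p ! Suc j}}))"
proof -
  define S' where "S' = insert {a, c} (S - {{p ! j, p ! Suc j}})"
  define n where "n = length p"
  have ne: "p \<noteq> []" using p(1) by (simp add: is_path_def)
  have l: "p ! (n - 1) = c" "p ! 0 = a" using p ne by (auto simp: last_conv_nth hd_conv_nth n_def)
  have edges_in: "{p ! m, p ! Suc m} \<in> S'" if "Suc m < n" "m \<noteq> j" for m
    using is_pathD[OF p(1)] path_edge_inj[OF p(1), of m j] that j
    unfolding S'_def n_def by blast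
  have "(adj S')\<^sup>*\<^sup>* (p ! j) a"
    using reach_sym[OF reach_segment[OF p(1), of 0 j S']] edges_in j l n_def by auto
  moreover have "adj S' a c" unfolding S'_def adj_def by simp
  moreover have "(adj S')\<^sup>*\<^sup>* c (p ! Suc j)"
    using reach_sym[OF reach_segment[OF p(1), of "Suc j" "n - 1" S']] edges_in j l n_def by auto
  ultimately have rf: "(adj S')\<^sup>*\<^sup>* (p ! j) (p ! Suc j)"
    by (meson rtranclp.rtrancl_into_rtrancl rtranclp_trans)
  have lift: "(adj S')\<^sup>*\<^sup>* x y" if "adj S x y" for x y
  proof (cases "{x, y} = {p ! j, p ! Suc j}")
    case True
    then show ?thesis using rf reach_sym[OF rf] by (auto simp: doubleton_eq_iff)
  next
    case False
    then show ?thesis using that by (intro r_into_rtranclp) (simp add: adj_def S'_def)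
  qed
  have "(adj S')\<^sup>*\<^sup>* u v" if "(adj S)\<^sup>*\<^sup>* u v" for u v
    using that
  proof (induction rule: rtranclp_induct)
    case (step y z) then show ?case using lift by (meson rtranclp_trans)
  qed simp
  then show ?thesis using con unfolding connected_on_reach S'_def by blast
qed

lemma tree_exchange:
  assumes tree: "is_tree V S" and p: "is_path S p" "hd p = a" "last p = c"
    and j: "Suc j < length p"
  shows "is_tree V (insert {a, c} (S - {{p ! j, p ! Suc j}}))"
proof -
  have sg: "simple_graph V S" using tree by (simp add: is_tree_def)
  have ne: "p \<noteq> []" using p(1) by (simp add: is_path_def)
  have "hd p \<in> V" using simple_graph_edgeD[OF sg is_pathD[OF p(1), of 0]] j ne by (simp add: hd_conv_nth)
  then have "a \<in> V" "c \<in> V" using path_set_V[OF sg p(1)] p ne by auto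
  moreover have "a \<noteq> c"
    using p j ne nth_eq_iff_index_eq[of p 0 "length p - 1"] by (simp add: is_path_def hd_conv_nth last_conv_nth)
  ultimately have "simple_graph V (insert {a, c} (S - {{p ! j, p ! Suc j}}))"
    using sg unfolding simple_graph_def by blast
  then show ?thesis
    using tree exchange_acyclic[OF _ p j] exchange_connected[OF _ p j] by (simp add: is_tree_def)
qed

section \<open>Degrees\<close>

lemma tdeg_insert:
  assumes "finite S" "e \<notin> S"
  shows "tdeg (insert e S) v = tdeg S v + (if v \<in> e then 1 else 0)"
proof (cases "v \<in> e")
  case True
  then have "{x \<in> insert e S. v \<in> x} = insert e {x \<in> S. v \<in> x}" by auto
  then show ?thesis using assms True by (simp add: tdeg_def)
next
  case False
  then have "{x \<in> insert e S. v \<in> x} = {x \<in> S. v \<in> x}" by auto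
  then show ?thesis using False by (simp add: tdeg_def)
qed

lemma tdeg_remove:
  assumes "finite S" "f \<in> S"
  shows "tdeg (S - {f}) v + (if v \<in> f then 1 else 0) = tdeg S v"
proof -
  have "{x \<in> S - {f}. v \<in> x} = {x \<in> S. v \<in> x} - {f}" by auto
  moreover have "v \<in> f \<Longrightarrow> card {x \<in> S. v \<in> x} > 0" using assms by (auto simp: card_gt_0_iff)
  ultimately show ?thesis using assms by (simp add: tdeg_def card_Diff_singleton)
qed

lemma tdeg_exchange:
  assumes "finite S" "f \<in> S" "e \<notin> S"
  shows "tdeg (insert e (S - {f})) v + (if v \<in> f then 1 else 0) = tdeg S v + (if v \<in> e then 1 else 0)"
  using tdeg_insert[of "S - {f}" e v] tdeg_remove[OF assms(1,2), of v] assms by simp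

lemma tdeg_ge2:
  assumes "finite S" "{q, a} \<in> S" "{q, b} \<in> S" "a \<noteq> b"
  shows "tdeg S q \<ge> 2"
proof -
  have sub: "{{q, a}, {q, b}} \<subseteq> {e \<in> S. q \<in> e}" using assms by auto
  have ne: "{q, a} \<noteq> {q, b}" using assms(4) by (auto simp: doubleton_eq_iff)
  have "card {{q, a}, {q, b}} = 2" using ne by simp
  moreover have "card {{q, a}, {q, b}} \<le> card {e \<in> S. q \<in> e}" using sub assms(1) by (intro card_mono) auto
  ultimately show ?thesis unfolding tdeg_def by simp
qed

lemma tdeg_le1_neighbour:
  assumes "finite S" "{q, a} \<in> S" "tdeg S q \<le> 1" "{q, c} \<in> S"
  shows "c = a"
  using tdeg_ge2[OF assms(1,2,4)] assms(3) by fastforce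

lemma tdeg_le2_neighbours:
  assumes "finite S" "{q, a} \<in> S" "{q, b} \<in> S" "a \<noteq> b" "tdeg S q \<le> 2" "{q, c} \<in> S"
  shows "c = a \<or> c = b"
proof (rule ccontr)
  assume h: "\<not> (c = a \<or> c = b)"
  have sub: "{{q, a}, {q, b}, {q, c}} \<subseteq> {e \<in> S. q \<in> e}" using assms by auto
  have n1: "{q, a} \<noteq> {q, b}" using assms(4) by (auto simp: doubleton_eq_iff)
  have n2: "{q, a} \<noteq> {q, c}" using h by (auto simp: doubleton_eq_iff)
  have n3: "{q, b} \<noteq> {q, c}" using h by (auto simp: doubleton_eq_iff)
  have "card {{q, a}, {q, b}, {q, c}} = 3" using n1 n2 n3 by simp
  moreover have "card {{q, a}, {q, b}, {q, c}} \<le> card {e \<in> S. q \<in> e}" using sub assms(1) by (intro card_mono) auto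
  ultimately show False using assms(5) unfolding tdeg_def by simp
qed

lemma leaf_tdeg: "v \<in> leaves V S \<Longrightarrow> tdeg S v = 1 \<and> v \<in> V"
  unfolding leaves_def by simp

lemma nonbranch_tdeg: "v \<in> V \<Longrightarrow> v \<notin> branches V S \<Longrightarrow> tdeg S v \<le> 2"
  unfolding branches_def by simp

lemma branch_in_V: "y \<in> branches V S \<Longrightarrow> y \<in> V"
  unfolding branches_def by simp

lemma leaf_not_branch: "u \<in> leaves V S \<Longrightarrow> u \<notin> branches V S"
  by (simp add: leaves_def branches_def)

lemma leaf_neighbour:
  assumes sg: "simple_graph V S" and u: "u \<in> leaves V S"
  obtains z where "{u, z} \<in> S"
proof -
  have "tdeg S u = 1" using u by (simp add: leaves_def)
  then have "{e \<in> S. u \<in> e} \<noteq> {}" unfolding tdeg_def by (metis card.empty zero_neq_one)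
  then obtain e where e: "e \<in> S" "u \<in> e" by blast
  then obtain a c where "e = {a, c}" using sg unfolding simple_graph_def by blast
  then show thesis using that e by (auto simp: insert_commute)
qed

section \<open>Stems\<close>

lemma branch_free_walks_agree:
  assumes tr: "is_tree V S" and l: "l \<in> leaves V S"
    and p: "is_path S p" "hd p = l" "\<forall>k. Suc k < length p \<longrightarrow> p ! k \<notin> branches V S"
    and q: "is_path S q" "hd q = l" "\<forall>k. Suc k < length q \<longrightarrow> q ! k \<notin> branches V S"
  shows "i < length p \<Longrightarrow> i < length q \<Longrightarrow> p ! i = q ! i"
proof (induction i rule: less_induct)
  case (less i)
  have fin: "finite S" using tree_finite[OF tr] .
  have sg: "simple_graph V S" using tree_simple_graph[OF tr] .
  have lV: "l \<in> V" using leaf_tdeg[OF l] by simp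
  have pne: "p \<noteq> []" "q \<noteq> []" using p(1) q(1) by (auto simp: is_path_def)
  have h0: "p ! 0 = l" "q ! 0 = l" using p(2) q(2) pne by (auto simp: hd_conv_nth)
  show ?case
  proof (cases i)
    case 0 then show ?thesis using h0 by simp
  next
    case (Suc m)
    show ?thesis
    proof (cases m)
      case 0
      have e1: "{l, p ! 1} \<in> S" using is_pathD[OF p(1), of 0] less.prems Suc 0 h0 by simp
      have e2: "{l, q ! 1} \<in> S" using is_pathD[OF q(1), of 0] less.prems Suc 0 h0 by simp
      have "tdeg S l \<le> 1" using leaf_tdeg[OF l] by simp
      then show ?thesis using tdeg_le1_neighbour[OF fin e1 _ e2] Suc 0 by simp
    next
      case (Suc k)
      have ih1: "p ! m = q ! m" using less.IH[of m] less.prems \<open>i = Suc m\<close> by simp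
      have ih0: "p ! k = q ! k" using less.IH[of k] less.prems \<open>i = Suc m\<close> Suc by simp
      define c where "c = p ! m"
      have cV: "c \<in> V" using path_set_V[OF sg p(1)] p(2) lV less.prems \<open>i = Suc m\<close> c_def by auto
      have cB: "c \<notin> branches V S" using p(3) less.prems \<open>i = Suc m\<close> c_def by simp
      have dc: "tdeg S c \<le> 2" using nonbranch_tdeg[OF cV cB] .
      have ea: "{c, p ! k} \<in> S" using path_edge_sym[OF p(1), of k] Suc less.prems \<open>i = Suc m\<close> c_def by simp
      have eb: "{c, p ! i} \<in> S" using is_pathD[OF p(1), of m] less.prems \<open>i = Suc m\<close> c_def by simp
      have ec: "{c, q ! i} \<in> S" using is_pathD[OF q(1), of m] less.prems \<open>i = Suc m\<close> c_def ih1 by simp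
      have dp: "distinct p" "distinct q" using p(1) q(1) by (auto simp: is_path_def)
      have ab: "p ! k \<noteq> p ! i" using nth_eq_iff_index_eq[OF dp(1), of k i] less.prems \<open>i = Suc m\<close> Suc by simp
      have qk: "q ! i \<noteq> q ! k" using nth_eq_iff_index_eq[OF dp(2), of i k] less.prems \<open>i = Suc m\<close> Suc by simp
      have "q ! i = p ! k \<or> q ! i = p ! i" using tdeg_le2_neighbours[OF fin ea eb ab dc ec] .
      then show ?thesis using qk ih0 by auto
    qed
  qed
qed

lemma branch_free_walk_last_mem:
  assumes tr: "is_tree V S" and l: "l \<in> leaves V S"
    and p: "is_path S p" "hd p = l" "\<forall>k. Suc k < length p \<longrightarrow> p ! k \<notin> branches V S"
    and q: "is_path S q" "hd q = l" "\<forall>k. Suc k < length q \<longrightarrow> q ! k \<notin> branches V S"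
    and len: "length p \<le> length q"
  shows "last p \<in> set q"
proof -
  have ne: "p \<noteq> []" using p(1) by (simp add: is_path_def)
  then have "0 < length p" by simp
  then have i: "length p - 1 < length p" "length p - 1 < length q" using len by linarith+
  then have "last p = q ! (length p - 1)"
    using branch_free_walks_agree[OF tr l p q i] ne by (simp add: last_conv_nth)
  then show ?thesis using i(2) by simp
qed

definition stem_end :: "'a set \<Rightarrow> 'a set set \<Rightarrow> 'a \<Rightarrow> 'a \<Rightarrow> bool" where
  "stem_end V S l y \<longleftrightarrow> y \<in> branches V S \<and> tpath S l y \<inter> branches V S = {y}"

lemma stem_end_path:
  assumes tr: "is_tree V S" and l: "l \<in> V" and g: "stem_end V S l y"
  shows "is_path S (tp S l y)" "hd (tp S l y) = l" "last (tp S l y) = y"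
    and "\<forall>k. Suc k < length (tp S l y) \<longrightarrow> tp S l y ! k \<notin> branches V S"
proof -
  define q where "q = tp S l y"
  have yB: "y \<in> branches V S" using g by (simp add: stem_end_def)
  have yV: "y \<in> V" using branch_in_V[OF yB] .
  have qp: "is_path S q" "hd q = l" "last q = y" using tp_path[OF tr l yV] q_def by auto
  have ne: "q \<noteq> []" using qp by (simp add: is_path_def)
  have d: "distinct q" using qp by (simp add: is_path_def)
  have ly: "q ! (length q - 1) = y" using qp ne by (simp add: last_conv_nth)
  have "\<forall>k. Suc k < length q \<longrightarrow> q ! k \<notin> branches V S"
  proof (intro allI impI notI)
    fix k assume k: "Suc k < length q" "q ! k \<in> branches V S"
    have "q ! k \<in> tpath S l y" using k(1) tpath_tp q_def by (metis Suc_lessD nth_mem)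
    then have "q ! k = y" using k(2) g unfolding stem_end_def by blast
    then have "k = length q - 1" using nth_eq_iff_index_eq[OF d, of k "length q - 1"] ly k(1) by simp
    then show False using k(1) by simp
  qed
  then show "\<forall>k. Suc k < length (tp S l y) \<longrightarrow> tp S l y ! k \<notin> branches V S" using q_def by simp
  show "is_path S (tp S l y)" "hd (tp S l y) = l" "last (tp S l y) = y" using qp q_def by simp_all
qed

lemma stem_end_exists:
  assumes tr: "is_tree V S" and l: "l \<in> V" and bne: "branches V S \<noteq> {}"
  shows "\<exists>y. stem_end V S l y"
proof -
  obtain b0 where b0: "b0 \<in> branches V S" using bne by blast
  have b0V: "b0 \<in> V" using branch_in_V[OF b0] .
  define P where "P = tp S l b0"
  have pp: "is_path S P" "hd P = l" "last P = b0" using tp_path[OF tr l b0V] P_def by auto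
  have ne: "P \<noteq> []" using pp by (simp add: is_path_def)
  have ex: "\<exists>j. j < length P \<and> P ! j \<in> branches V S"
    using ne pp b0 by (intro exI[of _ "length P - 1"]) (simp add: last_conv_nth)
  define j where "j = (LEAST j. j < length P \<and> P ! j \<in> branches V S)"
  have j: "j < length P" "P ! j \<in> branches V S" using LeastI_ex[OF ex] j_def by auto
  have jmin: "\<And>k. k < j \<Longrightarrow> P ! k \<notin> branches V S"
  proof -
    fix k assume "k < j"
    then have "\<not> (k < length P \<and> P ! k \<in> branches V S)" using not_less_Least j_def by blast
    then show "P ! k \<notin> branches V S" using \<open>k < j\<close> j(1) by simp
  qed
  define q where "q = take (Suc j) P"
  have qp: "is_path S q" using path_take[OF pp(1)] q_def by simp
  have qh: "hd q = l" using pp(2) ne q_def by simp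
  have ql: "last q = P ! j" using j(1) q_def by (simp add: take_Suc_conv_app_nth)
  have yV: "P ! j \<in> V" using branch_in_V[OF j(2)] .
  have tq: "tp S l (P ! j) = q" using tp_unique[OF tr qp qh ql] .
  have "tpath S l (P ! j) \<inter> branches V S = {P ! j}"
  proof
    show "tpath S l (P ! j) \<inter> branches V S \<subseteq> {P ! j}"
    proof
      fix x assume x: "x \<in> tpath S l (P ! j) \<inter> branches V S"
      then have "x \<in> set q" using tq by (simp add: tpath_tp)
      then obtain k where k: "k < length q" "q ! k = x" by (auto simp: in_set_conv_nth)
      have kj: "k \<le> j" using k(1) q_def by simp
      have "x = P ! k" using k kj q_def by simp
      then have "\<not> k < j" using jmin x by auto
      then have "k = j" using kj by simp
      then show "x \<in> {P ! j}" using \<open>x = P ! k\<close> by simp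
    qed
  next
    have "P ! j \<in> set q" using ql qp by (metis is_path_def last_in_set)
    then show "{P ! j} \<subseteq> tpath S l (P ! j) \<inter> branches V S" using tq j(2) by (simp add: tpath_tp)
  qed
  then show ?thesis using j(2) unfolding stem_end_def by blast
qed

lemma stem_end_unique:
  assumes tr: "is_tree V S" and l: "l \<in> leaves V S" and y: "stem_end V S l y" "stem_end V S l y'"
  shows "y = y'"
proof -
  have lV: "l \<in> V" using leaf_tdeg[OF l] by simp
  have "y \<in> tpath S l y'" if "stem_end V S l y" "stem_end V S l y'"
    "length (tp S l y) \<le> length (tp S l y')" for y y'
    using branch_free_walk_last_mem[OF tr l _ _ _ _ _ _ that(3)] stem_end_path[OF tr lV that(1)]
      stem_end_path[OF tr lV that(2)] by (simp add: tpath_tp)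
  then show ?thesis using y unfolding stem_end_def by (metis IntI nat_le_linear singletonD)
qed

lemma stem_removed_eq:
  assumes tr: "is_tree V S" and l: "l \<in> leaves V S" and bne: "branches V S \<noteq> {}"
  obtains y where "stem_end V S l y" "stem_removed V S l = tpath S l y - {y}"
proof -
  have lV: "l \<in> V" using leaf_tdeg[OF l] by simp
  obtain y where g: "stem_end V S l y" using stem_end_exists[OF tr lV bne] by blast
  have "(THE y. y \<in> branches V S \<and> tpath S l y \<inter> branches V S = {y}) = y"
  proof (rule the_equality)
    show "y \<in> branches V S \<and> tpath S l y \<inter> branches V S = {y}" using g unfolding stem_end_def .
    fix y' assume "y' \<in> branches V S \<and> tpath S l y' \<inter> branches V S = {y'}"
    then have "stem_end V S l y'" unfolding stem_end_def .
    then show "y' = y" using stem_end_unique[OF tr l _ g] by blast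
  qed
  then have "stem_removed V S l = tpath S l y - {y}" unfolding stem_removed_def Let_def by simp
  then show ?thesis using g that by blast
qed

lemma stem_removed_path:
  assumes tr: "is_tree V S" and l: "l \<in> leaves V S" and bne: "branches V S \<noteq> {}"
    and w: "w \<in> stem_removed V S l"
  shows "\<exists>p. is_path S p \<and> hd p = l \<and> last p = w \<and> set p \<inter> branches V S = {}"
proof -
  have lV: "l \<in> V" using leaf_tdeg[OF l] by simp
  obtain y where g: "stem_end V S l y" and st: "stem_removed V S l = tpath S l y - {y}"
    using stem_removed_eq[OF tr l bne] by blast
  define q where "q = tp S l y"
  have h: "is_path S q" "hd q = l" "last q = y" "\<forall>k. Suc k < length q \<longrightarrow> q ! k \<notin> branches V S"
    using stem_end_path[OF tr lV g] q_def by auto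
  have ne: "q \<noteq> []" using h by (simp add: is_path_def)
  have d: "distinct q" using h by (simp add: is_path_def)
  have "w \<in> set q" "w \<noteq> y" using w st q_def by (auto simp: tpath_tp)
  then obtain k where k: "k < length q" "q ! k = w" by (auto simp: in_set_conv_nth)
  have "k \<noteq> length q - 1" using k \<open>w \<noteq> y\<close> h(3) ne by (auto simp: last_conv_nth)
  then have kk: "Suc k < length q" using k(1) by simp
  define p where "p = take (Suc k) q"
  have pp: "is_path S p" using path_take[OF h(1)] p_def by simp
  have ph: "hd p = l" using h(2) ne p_def by simp
  have pl: "last p = w" using k p_def by (simp add: take_Suc_conv_app_nth)
  have "set p \<inter> branches V S = {}"
  proof (rule ccontr)
    assume "set p \<inter> branches V S \<noteq> {}"
    then obtain x where x: "x \<in> set p" "x \<in> branches V S" by blast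
    then obtain i where i: "i < length p" "p ! i = x" by (auto simp: in_set_conv_nth)
    have "i \<le> k" using i(1) p_def by simp
    then have "Suc i < length q" using kk by simp
    moreover have "q ! i = x" using i \<open>i \<le> k\<close> p_def by simp
    ultimately show False using h(4) x(2) by blast
  qed
  then show ?thesis using pp ph pl by blast
qed

lemma branch_free_path_stem_removed:
  assumes tr: "is_tree V S" and l: "l \<in> leaves V S" and bne: "branches V S \<noteq> {}"
    and p: "is_path S p" "hd p = l" "set p \<inter> branches V S = {}"
  shows "last p \<in> stem_removed V S l"
proof -
  have lV: "l \<in> V" using leaf_tdeg[OF l] by simp
  obtain y where y: "stem_end V S l y" and st: "stem_removed V S l = tpath S l y - {y}"
    using stem_removed_eq[OF tr l bne] by blast
  have yB: "y \<in> branches V S" using y by (simp add: stem_end_def)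
  have q: "is_path S (tp S l y)" "hd (tp S l y) = l" "last (tp S l y) = y"
    "\<forall>k. Suc k < length (tp S l y) \<longrightarrow> tp S l y ! k \<notin> branches V S"
    using stem_end_path[OF tr lV y] by auto
  have pB: "\<forall>k. Suc k < length p \<longrightarrow> p ! k \<notin> branches V S"
    using p(3) by (metis Suc_lessD disjoint_iff nth_mem)
  have "\<not> length (tp S l y) \<le> length p"
  proof
    assume "length (tp S l y) \<le> length p"
    then have "y \<in> set p" using branch_free_walk_last_mem[OF tr l q(1,2,4) p(1,2) pB] q(3) by simp
    then show False using yB p(3) by blast
  qed
  then have "last p \<in> tpath S l y"
    using branch_free_walk_last_mem[OF tr l p(1,2) pB q(1,2,4)] by (simp add: tpath_tp)
  moreover have "last p \<noteq> y" using p yB by (metis disjoint_iff is_path_def last_in_set)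
  ultimately show ?thesis using st by simp
qed

lemma branch_free_leaf_path_avoids:
  assumes Q: "\<forall>q\<in>Q. tdeg S q \<noteq> 1 \<and> (\<forall>c. {q, c} \<in> S \<longrightarrow> c \<in> Q \<union> branches V S)"
  shows "is_path S p \<Longrightarrow> hd p \<in> leaves V S \<Longrightarrow> set p \<inter> branches V S = {} \<Longrightarrow> set p \<inter> Q = {}"
proof (induction p rule: rev_induct)
  case Nil then show ?case by (simp add: is_path_def)
next
  case (snoc c p')
  show ?case
  proof (cases "p' = []")
    case True
    then have "c \<in> leaves V S" using snoc.prems by simp
    then have "tdeg S c = 1" by (simp add: leaves_def)
    then show ?thesis using Q True by auto
  next
    case False
    have pp: "is_path S p'" using path_take[OF snoc.prems(1), of "length p'"] False by simp
    have hp: "hd p' \<in> leaves V S" using snoc.prems(2) False by simp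
    have bp: "set p' \<inter> branches V S = {}" using snoc.prems(3) by auto
    have ih: "set p' \<inter> Q = {}" using snoc.IH[OF pp hp bp] .
    have e: "{last p', c} \<in> S"
      using is_pathD[OF snoc.prems(1), of "length p' - 1"] False
      by (simp add: nth_append last_conv_nth)
    have lin: "last p' \<in> set p'" using False by simp
    have "c \<notin> Q"
    proof
      assume "c \<in> Q"
      then have "last p' \<in> Q \<union> branches V S" using Q edge_sym[OF e] by blast
      then show False using ih bp lin by blast
    qed
    then show ?thesis using ih by simp
  qed
qed

section \<open>Joining adjacent leaves\<close>

lemma branch_free_path_closed:
  assumes sg: "simple_graph V S" and p: "is_path S p" and len: "length p \<ge> 2"
    and dh: "tdeg S (hd p) = 1" and dl: "tdeg S (last p) = 1" and hV: "hd p \<in> V"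
    and nb: "set p \<inter> branches V S = {}" and k: "k < length p" and e: "{p ! k, c} \<in> S"
  shows "c \<in> set p"
proof -
  have fin: "finite S" using simple_graph_finite[OF sg] .
  define n where "n = length p"
  have "p \<noteq> []" using len by auto
  then have h0: "hd p = p ! 0" "last p = p ! (n - 1)" by (auto simp: hd_conv_nth last_conv_nth n_def)
  consider "k = 0" | "k = n - 1" | k' where "k = Suc k'" "Suc k < n"
    using k n_def by (cases k) force+
  then show ?thesis
  proof cases
    case 1
    have "{p ! 0, p ! 1} \<in> S" using is_pathD[OF p, of 0] len by simp
    then have "c = p ! 1" using tdeg_le1_neighbour[OF fin] e 1 dh h0 by simp
    then show ?thesis using len by simp
  next
    case 2
    have "{p ! (n - 1), p ! (n - 2)} \<in> S"
      using path_edge_sym[OF p, of "n - 2"] len n_def by (simp add: numeral_2_eq_2 Suc_diff_Suc)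
    then have "c = p ! (n - 2)" using tdeg_le1_neighbour[OF fin] e 2 dl h0 by simp
    then show ?thesis using len n_def by simp
  next
    case 3
    have kB: "p ! k \<notin> branches V S" using nb k by (metis disjoint_iff nth_mem)
    have "p ! k \<in> V" using path_set_V[OF sg p hV] k by auto
    then have d2: "tdeg S (p ! k) \<le> 2" by (rule nonbranch_tdeg[OF _ kB])
    have ea: "{p ! k, p ! k'} \<in> S" using path_edge_sym[OF p, of k'] 3 n_def by simp
    have eb: "{p ! k, p ! Suc k} \<in> S" using is_pathD[OF p, of k] 3 n_def by simp
    have "p ! k' \<noteq> p ! Suc k"
      using p 3 n_def nth_eq_iff_index_eq[of p k' "Suc k"] by (simp add: is_path_def)
    then have "c = p ! k' \<or> c = p ! Suc k" using tdeg_le2_neighbours[OF fin ea eb _ d2 e] by blast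
    then show ?thesis using 3 n_def by auto
  qed
qed

lemma branch_free_leaf_path_spans:
  assumes tr: "is_tree V S" and p: "is_path S p" and len: "length p \<ge> 2"
    and dh: "tdeg S (hd p) = 1" and dl: "tdeg S (last p) = 1" and hV: "hd p \<in> V"
    and nb: "set p \<inter> branches V S = {}"
  shows "set p = V"
proof
  have sg: "simple_graph V S" using tree_simple_graph[OF tr] .
  show "set p \<subseteq> V" using path_set_V[OF sg p hV] .
  have "v \<in> set p" if "(adj S)\<^sup>*\<^sup>* (hd p) v" for v
    using that
  proof (induction rule: rtranclp_induct)
    case base then show ?case using len by (cases p) auto
  next
    case (step y z)
    then obtain k where "k < length p" "p ! k = y" by (auto simp: in_set_conv_nth)
    then show ?case using branch_free_path_closed[OF sg p len dh dl hV nb] step.hyps(2)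
      by (auto simp: adj_def)
  qed
  then show "V \<subseteq> set p" using tr hV unfolding is_tree_def connected_on_reach by blast
qed

lemma leaves_exchange_at_branch:
  assumes fin: "finite S" and f: "{y, y'} \<in> S" and y: "tdeg S y \<ge> 3"
    and e: "{u, v} \<notin> S" and uv: "u \<in> leaves V S" "v \<in> leaves V S"
  shows "leaves V (insert {u, v} (S - {{y, y'}})) \<subseteq> (leaves V S - {u, v}) \<union> {y'}"
proof
  fix w assume w: "w \<in> leaves V (insert {u, v} (S - {{y, y'}}))"
  have "tdeg (insert {u, v} (S - {{y, y'}})) w = 1" "w \<in> V" using w by (auto simp: leaves_def)
  then have "1 + (if w \<in> {y, y'} then 1 else 0) = tdeg S w + (if w \<in> {u, v} then 1 else 0)"
    using tdeg_exchange[OF fin f e, of w] by simp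
  then show "w \<in> (leaves V S - {u, v}) \<union> {y'}"
    using y uv \<open>w \<in> V\<close> by (auto simp: leaves_def split: if_splits)
qed

lemma leaves_finite: "is_tree V S \<Longrightarrow> finite (leaves V S)"
  unfolding is_tree_def simple_graph_def leaves_def by simp

lemma card_insert_Diff1_le:
  assumes "finite L" "a \<in> L"
  shows "card (insert t (L - {a})) \<le> card L"
proof -
  have "card (insert t (L - {a})) \<le> Suc (card (L - {a}))" using assms(1) by (simp add: card_insert_if)
  moreover have "Suc (card (L - {a})) = card L" by (rule card_Suc_Diff1[OF assms])
  ultimately show ?thesis by simp
qed

lemma card_insert_Diff2_less:
  assumes "finite L" "a \<in> L" "c \<in> L" "a \<noteq> c"
  shows "card (insert t (L - {a, c})) < card L"
proof -
  have "card (insert t (L - {a, c})) \<le> Suc (card (L - {a, c}))" using assms(1) by (simp add: card_insert_if)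
  moreover have "card (L - {a, c}) = card L - 2" using assms by (simp add: card_Diff_subset)
  moreover have "card {a, c} \<le> card L" using assms by (intro card_mono) auto
  ultimately show ?thesis using assms(4) by simp
qed

lemma leaf_path_inner_branch:
  assumes tr: "is_tree V S" and SE: "S \<subseteq> E" and u: "u \<in> leaves V S" and v: "v \<in> leaves V S"
    and uv: "u \<noteq> v" and noham: "\<not> (\<exists>p. hamiltonian_path V E p)"
  obtains j where "0 < j" "Suc j < length (tp S u v)" "tp S u v ! j \<in> branches V S"
proof -
  have uV: "u \<in> V" and du: "tdeg S u = 1" and vV: "v \<in> V" and dv: "tdeg S v = 1"
    using u v by (auto simp: leaves_def)
  define p where "p = tp S u v"
  have pp: "is_path S p" "hd p = u" "last p = v" using tp_path[OF tr uV vV] p_def by auto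
  have ne: "p \<noteq> []" using pp by (simp add: is_path_def)
  have len: "length p \<ge> 2" using pp ne uv by (cases p; cases "tl p") auto
  have "set p \<noteq> V"
  proof
    assume "set p = V"
    then have "hamiltonian_path V E p" using path_mono[OF pp(1) SE] by (simp add: hamiltonian_path_def)
    then show False using noham by blast
  qed
  then obtain y where y: "y \<in> set p" "y \<in> branches V S"
    using branch_free_leaf_path_spans[OF tr pp(1) len] du dv pp uV by blast
  then obtain j where j: "j < length p" "p ! j = y" by (auto simp: in_set_conv_nth)
  have "p ! (length p - 1) = v" using pp ne by (simp add: last_conv_nth)
  then have "Suc j < length p" using j y(2) leaf_not_branch[OF v] by (cases "j = length p - 1") auto
  moreover have "j \<noteq> 0" using j y(2) leaf_not_branch[OF u] pp(2) ne by (metis hd_conv_nth)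
  ultimately show ?thesis using that j y(2) p_def by blast
qed

lemma join_adjacent_leaves:
  assumes tr: "is_tree V S" and SE: "S \<subseteq> E" and u: "u \<in> leaves V S" and v: "v \<in> leaves V S"
    and uv: "u \<noteq> v" "{u, v} \<in> E" and noham: "\<not> (\<exists>p. hamiltonian_path V E p)"
  obtains S' where "spanning_tree V E S'" "card (leaves V S') < card (leaves V S)"
proof -
  obtain j where j: "0 < j" "Suc j < length (tp S u v)" "tp S u v ! j \<in> branches V S"
    using leaf_path_inner_branch[OF tr SE u v uv(1) noham] .
  define p where "p = tp S u v"
  have pp: "is_path S p" "hd p = u" "last p = v" using tp_path[OF tr] u v p_def by (auto simp: leaves_def)
  have eS: "{u, v} \<notin> S"
  proof
    assume "{u, v} \<in> S"
    then have "p = [u, v]" using tp_unique[OF tr, of "[u, v]" u v] uv(1) p_def by (simp add: is_path_def)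
    then show False using j p_def by simp
  qed
  define S' where "S' = insert {u, v} (S - {{p ! j, p ! Suc j}})"
  have sp: "spanning_tree V E S'"
    using is_tree_spanning_tree[OF tree_exchange[OF tr pp]] j uv(2) SE S'_def p_def by auto
  have "leaves V S' \<subseteq> (leaves V S - {u, v}) \<union> {p ! Suc j}"
    using leaves_exchange_at_branch[OF tree_finite[OF tr] is_pathD[OF pp(1)] _ eS u v] j p_def
    unfolding S'_def by (simp add: branches_def)
  then have "card (leaves V S') \<le> card (insert (p ! Suc j) (leaves V S - {u, v}))"
    using leaves_finite[OF tr] by (intro card_mono) auto
  also have "\<dots> < card (leaves V S)" using card_insert_Diff2_less[OF leaves_finite[OF tr] u v uv(1)] .
  finally show ?thesis using that sp by blast
qed

section \<open>Moving a vertex\<close>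

definition move_leaf_into_edge :: "'a set set \<Rightarrow> 'a \<Rightarrow> 'a \<Rightarrow> 'a \<Rightarrow> 'a \<Rightarrow> 'a set set" where
  "move_leaf_into_edge S u z w x = insert {u, x} (insert {u, w} (S - {{u, z}, {w, x}}))"

lemma tree_move_leaf_into_edge:
  assumes tr: "is_tree V S" and u: "u \<in> leaves V S" and uz: "{u, z} \<in> S"
    and wx: "{w, x} \<in> S" and uwx: "u \<noteq> w" "u \<noteq> x"
  shows "is_tree V (move_leaf_into_edge S u z w x)"
proof -
  have fin: "finite S" using tree_finite[OF tr] .
  have sg: "simple_graph V S" using tree_simple_graph[OF tr] .
  have uV: "u \<in> V" and du: "tdeg S u \<le> 1" using u by (auto simp: leaves_def)
  have wV: "w \<in> V" and xV: "x \<in> V" and wx': "w \<noteq> x" using simple_graph_edgeD[OF sg wx] by auto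
  define S1 where "S1 = insert {u, w} (S - {{u, z}})"
  have tr1: "is_tree V S1"
  proof (cases "z = w")
    case True
    then have "S1 = S" using uz S1_def by auto
    then show ?thesis using tr by simp
  next
    case False
    define p where "p = tp S u w"
    have p: "is_path S p" "hd p = u" "last p = w" using tp_path[OF tr uV wV] p_def by auto
    have len: "Suc 0 < length p" using p uwx(1) by (cases p; cases "tl p") (auto simp: is_path_def)
    then have "{u, p ! 1} \<in> S" using is_pathD[OF p(1), of 0] p(1,2) by (simp add: hd_conv_nth is_path_def)
    then have "p ! 0 = u" "p ! 1 = z"
      using tdeg_le1_neighbour[OF fin uz du] p(1,2) by (auto simp: hd_conv_nth is_path_def)
    then show ?thesis using tree_exchange[OF tr p len] S1_def by simp
  qed
  have q: "is_path S1 [u, w, x]"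
    using uwx wx' wx S1_def by (auto simp: is_path_def nth_Cons' doubleton_eq_iff)
  have "move_leaf_into_edge S u z w x = insert {u, x} (S1 - {{[u, w, x] ! 1, [u, w, x] ! Suc 1}})"
    using uwx unfolding move_leaf_into_edge_def S1_def by (auto simp: doubleton_eq_iff)
  then show ?thesis using tree_exchange[OF tr1 q refl refl, of 1] by simp
qed

lemma tdeg_move_leaf_into_edge:
  assumes fin: "finite S" and du: "tdeg S u = 1" and uz: "{u, z} \<in> S" and wx: "{w, x} \<in> S"
    and ne: "u \<noteq> z" "u \<noteq> w" "u \<noteq> x" "w \<noteq> x" "z \<noteq> x"
  shows "tdeg (move_leaf_into_edge S u z w x) u = 2"
    and "tdeg (move_leaf_into_edge S u z w x) z + 1 = tdeg S z"
    and "v \<notin> {u, z} \<Longrightarrow> tdeg (move_leaf_into_edge S u z w x) v = tdeg S v"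
proof -
  define S0 where "S0 = S - {{u, z}} - {{w, x}}"
  have nbr: "c = z" if "{u, c} \<in> S" for c using tdeg_le1_neighbour[OF fin uz _ that] du by simp
  have uw: "{u, w} \<notin> S0" using nbr[of w] S0_def by auto
  have ux: "{u, x} \<notin> insert {u, w} S0" using nbr[of x] ne S0_def by (auto simp: doubleton_eq_iff)
  have wx0: "{w, x} \<in> S - {{u, z}}" using wx ne by (auto simp: doubleton_eq_iff)
  have "tdeg (move_leaf_into_edge S u z w x) v + (if v \<in> {u, z} then 1 else 0) + (if v \<in> {w, x} then 1 else 0)
      = tdeg S v + (if v \<in> {u, w} then 1 else 0) + (if v \<in> {u, x} then 1 else 0)" for v
  proof -
    have "move_leaf_into_edge S u z w x = insert {u, x} (insert {u, w} S0)"
      unfolding move_leaf_into_edge_def S0_def by (simp add: Diff_insert2 [symmetric] insert_commute)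
    moreover have "tdeg S0 v + (if v \<in> {w, x} then 1 else 0) + (if v \<in> {u, z} then 1 else 0) = tdeg S v"
      using tdeg_remove[OF _ wx0, of v] tdeg_remove[OF fin uz, of v] fin unfolding S0_def by simp
    ultimately show ?thesis
      using tdeg_insert[of "insert {u, w} S0" "{u, x}" v] tdeg_insert[of S0 "{u, w}" v] uw ux fin
      unfolding S0_def by simp
  qed
  from this[of u] this[of z] this[of v] du ne
  show "tdeg (move_leaf_into_edge S u z w x) u = 2"
    and "tdeg (move_leaf_into_edge S u z w x) z + 1 = tdeg S z"
    and "v \<notin> {u, z} \<Longrightarrow> tdeg (move_leaf_into_edge S u z w x) v = tdeg S v"
    by (auto split: if_splits)
qed

definition move_vertex_onto_leaf :: "'a set set \<Rightarrow> 'a \<Rightarrow> 'a \<Rightarrow> 'a \<Rightarrow> 'a \<Rightarrow> 'a set set" where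
  "move_vertex_onto_leaf S x x1 x2 u = insert {u, x} (insert {x1, x2} (S - {{x, x1}, {x, x2}}))"

lemma tree_move_vertex_onto_leaf:
  assumes tr: "is_tree V S" and e: "{x, x1} \<in> S" "{x, x2} \<in> S" "x1 \<noteq> x2" and dx: "tdeg S x = 2"
    and u: "u \<in> V" "u \<notin> {x, x1, x2}"
  shows "is_tree V (move_vertex_onto_leaf S x x1 x2 u)"
proof -
  have sg: "simple_graph V S" using tree_simple_graph[OF tr] .
  have ne: "x \<noteq> x1" "x \<noteq> x2" and xV: "x \<in> V" using simple_graph_edgeD[OF sg] e by blast+
  define S1 where "S1 = insert {x1, x2} (S - {{x1, x}})"
  have "is_path S [x1, x, x2]" using e ne by (auto simp: is_path_def nth_Cons' insert_commute)
  from tree_exchange[OF tr this refl refl, of 0] have tr1: "is_tree V S1" using S1_def by simp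
  have nbr: "c = x2" if "{x, c} \<in> S1" for c
    using that tdeg_le2_neighbours[OF tree_finite[OF tr] e, of c] dx ne u unfolding S1_def
    by (auto simp: doubleton_eq_iff)
  define q where "q = tp S1 u x"
  define n where "n = length q"
  have q: "is_path S1 q" "hd q = u" "last q = x" using tp_path[OF tr1 u(1) xV] q_def by auto
  have len: "Suc (n - 2) < n" "Suc (n - 2) = n - 1"
    using q u(2) unfolding n_def by (cases q; cases "tl q"; auto simp: is_path_def)+
  have "{x, q ! (n - 2)} \<in> S1"
    using path_edge_sym[OF q(1), of "n - 2"] q(1,3) len n_def by (simp add: last_conv_nth is_path_def)
  then have "q ! (n - 2) = x2" by (rule nbr)
  moreover have "move_vertex_onto_leaf S x x1 x2 u = insert {u, x} (S1 - {{x2, x}})"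
    using ne u(2) unfolding move_vertex_onto_leaf_def S1_def by (auto simp: doubleton_eq_iff)
  ultimately show ?thesis
    using tree_exchange[OF tr1 q, of "n - 2"] len q(1,3) n_def by (simp add: last_conv_nth is_path_def)
qed

lemma tdeg_move_vertex_onto_leaf:
  assumes tr: "is_tree V S" and e: "{x, x1} \<in> S" "{x, x2} \<in> S" "x1 \<noteq> x2" and dx: "tdeg S x = 2"
    and u: "u \<notin> {x, x1, x2}"
  shows "tdeg (move_vertex_onto_leaf S x x1 x2 u) x = 1"
    and "tdeg (move_vertex_onto_leaf S x x1 x2 u) u = tdeg S u + 1"
    and "v \<notin> {x, u} \<Longrightarrow> tdeg (move_vertex_onto_leaf S x x1 x2 u) v = tdeg S v"
proof -
  have fin: "finite S" using tree_finite[OF tr] .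
  have ne: "x \<noteq> x1" "x \<noteq> x2" using simple_graph_edgeD[OF tree_simple_graph[OF tr]] e by blast+
  define S0 where "S0 = S - {{x, x1}} - {{x, x2}}"
  have "{x1, x2} \<notin> S"
  proof
    assume "{x1, x2} \<in> S"
    moreover have "is_path S [x1, x, x2]" using e ne by (auto simp: is_path_def nth_Cons' insert_commute)
    ultimately have "has_cycle S"
      unfolding has_cycle_def by (intro exI[of _ "[x1, x, x2]"]) (simp add: insert_commute)
    then show False using tr by (simp add: is_tree_def)
  qed
  then have x12: "{x1, x2} \<notin> S0" unfolding S0_def by simp
  have ux: "{u, x} \<notin> insert {x1, x2} S0"
    using tdeg_le2_neighbours[OF fin e, of u] dx u unfolding S0_def by (auto simp: insert_commute doubleton_eq_iff)
  have e2: "{x, x2} \<in> S - {{x, x1}}" using e ne by (auto simp: doubleton_eq_iff)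
  have "tdeg (move_vertex_onto_leaf S x x1 x2 u) v + (if v \<in> {x, x1} then 1 else 0) + (if v \<in> {x, x2} then 1 else 0)
      = tdeg S v + (if v \<in> {x1, x2} then 1 else 0) + (if v \<in> {u, x} then 1 else 0)" for v
  proof -
    have "move_vertex_onto_leaf S x x1 x2 u = insert {u, x} (insert {x1, x2} S0)"
      unfolding move_vertex_onto_leaf_def S0_def by (simp add: Diff_insert2 [symmetric] insert_commute)
    moreover have "tdeg S0 v + (if v \<in> {x, x2} then 1 else 0) + (if v \<in> {x, x1} then 1 else 0) = tdeg S v"
      using tdeg_remove[OF _ e2, of v] tdeg_remove[OF fin e(1), of v] fin unfolding S0_def by simp
    ultimately show ?thesis
      using tdeg_insert[of "insert {x1, x2} S0" "{u, x}" v] tdeg_insert[of S0 "{x1, x2}" v] x12 ux fin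
      unfolding S0_def by simp
  qed
  from this[of x] this[of u] this[of v] dx ne u e(3)
  show "tdeg (move_vertex_onto_leaf S x x1 x2 u) x = 1"
    and "tdeg (move_vertex_onto_leaf S x x1 x2 u) u = tdeg S u + 1"
    and "v \<notin> {x, u} \<Longrightarrow> tdeg (move_vertex_onto_leaf S x x1 x2 u) v = tdeg S v"
    by (auto split: if_splits)
qed

section \<open>Trees satisfying (C1) and (C2)\<close>

lemma R_stem_verts_iff:
  "q \<in> R_stem_verts V S \<longleftrightarrow> q \<in> V \<and> (\<forall>l\<in>leaves V S. q \<notin> stem_removed V S l)"
  unfolding R_stem_verts_def by blast

locale extremal_spanning_tree =
  fixes V :: "'a set" and E T :: "'a set set" and b r :: 'a
  assumes sg: "simple_graph V E"
    and noham: "\<not> (\<exists>p. hamiltonian_path V E p)"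
    and c2: "C2 V E T"
    and bB: "b \<in> branches V T" and rB: "r \<in> branches V T"
    and bp: "tpath T b r \<inter> branches V T = {b, r}"
begin

lemma c1: "C1 V E T" using c2 by (simp add: C2_def)
lemma tr: "is_tree V T" using spanning_tree_is_tree[OF sg] c1 by (simp add: C1_def)
lemma TE: "T \<subseteq> E" using c1 by (simp add: C1_def spanning_tree_def)
lemma finT: "finite T" using tree_finite[OF tr] .
lemma finL: "finite (leaves V T)" using leaves_finite[OF tr] .
lemma leaves_min: "spanning_tree V E T' \<Longrightarrow> card (leaves V T) \<le> card (leaves V T')"
  using c1 by (simp add: C1_def)
lemma R_stem_max: "C1 V E T' \<Longrightarrow> card (R_stem_verts V T') \<le> card (R_stem_verts V T)"
  using c2 by (simp add: C2_def)

lemma path_in_V: "tpath T b r \<subseteq> V"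
  using tp_path[OF tr branch_in_V[OF bB] branch_in_V[OF rB]] branch_in_V[OF bB]
    path_set_V[OF tree_simple_graph[OF tr]] by (simp add: tpath_tp)

lemma interior_path_neighbours:
  assumes x: "x \<in> tpath T b r - {b, r}"
  obtains x1 x2 where "x1 \<in> tpath T b r" "x2 \<in> tpath T b r" "{x, x1} \<in> T" "{x, x2} \<in> T" "x1 \<noteq> x2"
proof -
  define P where "P = tp T b r"
  have P: "is_path T P" "hd P = b" "last P = r" "tpath T b r = set P"
    using tp_path[OF tr branch_in_V[OF bB] branch_in_V[OF rB]] by (auto simp: P_def tpath_tp)
  have ne: "P \<noteq> []" using P by (simp add: is_path_def)
  obtain k where k: "k < length P" "P ! k = x" using x P(4) by (auto simp: in_set_conv_nth)
  have "P ! 0 = b" "P ! (length P - 1) = r" using P(2,3) ne by (simp_all add: hd_conv_nth last_conv_nth)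
  then have "k \<noteq> 0" "k \<noteq> length P - 1" using k(2) x by (metis Diff_iff insertCI)+
  then obtain k' where k': "k = Suc k'" "Suc k < length P" using k by (cases k) auto
  have "P ! k' \<noteq> P ! Suc k"
    using P(1) k' nth_eq_iff_index_eq[of P k' "Suc k"] by (simp add: is_path_def)
  moreover have "{x, P ! k'} \<in> T" "{x, P ! Suc k} \<in> T"
    using path_edge_sym[OF P(1), of k'] is_pathD[OF P(1), of k] k k' by simp_all
  moreover have "P ! k' \<in> set P" "P ! Suc k \<in> set P" using k' by simp_all
  ultimately show ?thesis using that P(4) by simp
qed

lemma interior_tdeg: "x \<in> tpath T b r - {b, r} \<Longrightarrow> tdeg T x = 2"
proof -
  assume x: "x \<in> tpath T b r - {b, r}"
  obtain x1 x2 where "{x, x1} \<in> T" "{x, x2} \<in> T" "x1 \<noteq> x2"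
    using interior_path_neighbours[OF x] .
  then have "tdeg T x \<ge> 2" using tdeg_ge2[OF finT] by blast
  moreover have "x \<notin> branches V T" using x bp by blast
  moreover have "x \<in> V" using x path_in_V by blast
  ultimately show ?thesis using nonbranch_tdeg by fastforce
qed

lemma interior_neighbour: "x \<in> tpath T b r - {b, r} \<Longrightarrow> {x, c} \<in> T \<Longrightarrow> c \<in> tpath T b r"
  by (metis interior_path_neighbours interior_tdeg tdeg_le2_neighbours[OF finT] order_refl)

lemma path_vertex_tdeg: "q \<in> tpath T b r \<Longrightarrow> tdeg T q \<ge> 2"
  using interior_tdeg bB rB by (fastforce simp: branches_def)

lemma leaf_notin_path: "u \<in> leaves V T \<Longrightarrow> u \<notin> tpath T b r"
  using path_vertex_tdeg by (fastforce simp: leaves_def)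

lemma leaves_nonadj: "u \<in> leaves V T \<Longrightarrow> v \<in> leaves V T \<Longrightarrow> u \<noteq> v \<Longrightarrow> {u, v} \<notin> E"
  by (metis join_adjacent_leaves[OF tr TE _ _ _ _ noham] leaves_min not_le)

context
  fixes x w u z
  assumes x: "x \<in> tpath T b r - {b, r}" and w: "w \<in> tpath T b r" "{w, x} \<in> T"
    and u: "u \<in> leaves V T" and uz: "{u, z} \<in> T"
begin

abbreviation T' where "T' \<equiv> move_leaf_into_edge T u z w x"

lemma moved_leaf_distinct: "u \<noteq> z" "u \<noteq> w" "u \<noteq> x" "w \<noteq> x" "z \<notin> tpath T b r - {b, r}"
proof -
  have "u \<notin> tpath T b r" using leaf_notin_path[OF u] .
  then show "u \<noteq> w" "u \<noteq> x" "z \<notin> tpath T b r - {b, r}"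
    using x w interior_neighbour[of z u] uz by (auto simp: insert_commute)
  show "u \<noteq> z" "w \<noteq> x" using simple_graph_edgeD[OF tree_simple_graph[OF tr]] uz w(2) by blast+
qed

lemma moved_leaf_tree: "is_tree V T'"
  using tree_move_leaf_into_edge[OF tr u uz w(2)] moved_leaf_distinct by simp

lemma moved_leaf_tdeg: "tdeg T' u = 2" "tdeg T' z + 1 = tdeg T z" "v \<notin> {u, z} \<Longrightarrow> tdeg T' v = tdeg T v"
  using tdeg_move_leaf_into_edge[OF finT _ uz w(2)] u moved_leaf_distinct x
  by (auto simp: leaves_def)

lemma moved_leaf_edges: "{q, c} \<in> T' \<Longrightarrow> {q, c} = {u, x} \<or> {q, c} = {u, w} \<or> ({q, c} \<in> T \<and> {q, c} \<noteq> {u, z})"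
  unfolding move_leaf_into_edge_def by blast

lemma moved_leaf_leaves: "leaves V T' \<subseteq> insert z (leaves V T - {u})"
proof
  fix v assume "v \<in> leaves V T'"
  then have "v \<in> V" "tdeg T' v = 1" by (auto simp: leaves_def)
  then show "v \<in> insert z (leaves V T - {u})"
    using moved_leaf_tdeg(1) moved_leaf_tdeg(3)[of v] by (cases "v \<in> {u, z}") (auto simp: leaves_def)
qed

lemma moved_leaf_branches:
  assumes dz: "tdeg T z = 2"
  shows "branches V T' = branches V T"
proof -
  have "tdeg T' v \<ge> 3 \<longleftrightarrow> tdeg T v \<ge> 3" for v
    using moved_leaf_tdeg dz u by (cases "v \<in> {u, z}") (auto simp: leaves_def)
  then show ?thesis unfolding branches_def by blast
qed

lemma moved_leaf_core_closed:
  assumes dz: "tdeg T z = 2"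
  shows "\<forall>q\<in>(tpath T b r - {b, r}) \<union> {u}.
    tdeg T' q \<noteq> 1 \<and> (\<forall>c. {q, c} \<in> T' \<longrightarrow> c \<in> (tpath T b r - {b, r}) \<union> {u} \<union> branches V T')"
proof
  fix q assume q: "q \<in> (tpath T b r - {b, r}) \<union> {u}"
  have path: "tpath T b r \<subseteq> (tpath T b r - {b, r}) \<union> branches V T'"
    using moved_leaf_branches[OF dz] bB rB by blast
  have nbr: "c = z" if "{u, c} \<in> T" for c
    using tdeg_le1_neighbour[OF finT uz _ that] u by (simp add: leaves_def)
  show "tdeg T' q \<noteq> 1 \<and> (\<forall>c. {q, c} \<in> T' \<longrightarrow> c \<in> (tpath T b r - {b, r}) \<union> {u} \<union> branches V T')"
  proof (cases "q = u")
    case True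
    have "c \<in> {x, w}" if "{u, c} \<in> T'" for c
    proof -
      have "\<not> ({u, c} \<in> T \<and> {u, c} \<noteq> {u, z})" using nbr[of c] by auto
      then show ?thesis using moved_leaf_edges[OF that] by (auto simp: doubleton_eq_iff)
    qed
    moreover have "{x, w} \<subseteq> (tpath T b r - {b, r}) \<union> {u} \<union> branches V T'" using x w path by blast
    ultimately show ?thesis using True moved_leaf_tdeg(1) by auto
  next
    case False
    then have qi: "q \<in> tpath T b r - {b, r}" using q by simp
    have "q \<noteq> z" using qi moved_leaf_distinct(5) by blast
    then have "tdeg T' q = 2" using moved_leaf_tdeg(3)[of q] interior_tdeg[OF qi] False by simp
    moreover have "c \<in> tpath T b r \<or> c = u" if "{q, c} \<in> T'" for c
      using moved_leaf_edges[OF that] interior_neighbour[OF qi] False by (auto simp: doubleton_eq_iff)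
    ultimately show ?thesis using path by auto
  qed
qed

lemma moved_leaf_stem_removed:
  assumes dz: "tdeg T z = 2" and l: "l \<in> leaves V T'" and q: "q \<in> stem_removed V T' l"
  shows "\<exists>l'\<in>leaves V T. q \<in> stem_removed V T l'"
proof -
  have bne: "branches V T \<noteq> {}" using bB by blast
  have bne': "branches V T' \<noteq> {}" using moved_leaf_branches[OF dz] bB by blast
  obtain p where p: "is_path T' p" "hd p = l" "last p = q" "set p \<inter> branches V T' = {}"
    using stem_removed_path[OF moved_leaf_tree l bne' q] by blast
  have "set p \<inter> ((tpath T b r - {b, r}) \<union> {u}) = {}"
    using branch_free_leaf_path_avoids[OF moved_leaf_core_closed[OF dz] p(1)] p(2,4) l by simp
  then have unp: "u \<notin> set p" by blast
  have pT: "is_path T p"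
    unfolding is_path_def
  proof (intro conjI allI impI)
    show "p \<noteq> []" "distinct p" using p(1) by (auto simp: is_path_def)
    fix k assume k: "Suc k < length p"
    have "p ! k \<noteq> u" "p ! Suc k \<noteq> u" using unp k by (auto dest: nth_mem[of _ p])
    then show "{p ! k, p ! Suc k} \<in> T"
      using moved_leaf_edges[OF is_pathD[OF p(1) k]] by (auto simp: doubleton_eq_iff)
  qed
  have pB: "set p \<inter> branches V T = {}" using p(4) moved_leaf_branches[OF dz] by simp
  consider "l \<in> leaves V T" | "l = z" using moved_leaf_leaves l by blast
  then show ?thesis
  proof cases
    case 1
    then show ?thesis using branch_free_path_stem_removed[OF tr 1 bne pT p(2) pB] p(3) by blast
  next
    case 2
    \<comment> \<open>a stem ending at z extends the old stem of u\<close>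
    have up: "is_path T (u # p)" using path_cons[OF pT unp] p(2) uz 2 by simp
    have "set (u # p) \<inter> branches V T = {}" using pB leaf_not_branch[OF u] by simp
    then have "last (u # p) \<in> stem_removed V T u" using branch_free_path_stem_removed[OF tr u bne up] by simp
    then show ?thesis using u p(1,3) by (auto simp: is_path_def)
  qed
qed

text \<open>No stem of the new tree enters the interior of the path or reaches u, so every vertex of
  the old reducible stem survives and u is added to it.\<close>
lemma moved_leaf_R_stem_grows:
  assumes dz: "tdeg T z = 2"
  shows "card (R_stem_verts V T) < card (R_stem_verts V T')"
proof -
  have bne: "branches V T \<noteq> {}" using bB by blast
  have bne': "branches V T' \<noteq> {}" using moved_leaf_branches[OF dz] bB by blast
  have uV: "u \<in> V" using u by (simp add: leaves_def)
  have sub: "R_stem_verts V T \<subseteq> R_stem_verts V T'"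
  proof
    fix q assume "q \<in> R_stem_verts V T"
    then show "q \<in> R_stem_verts V T'"
      using moved_leaf_stem_removed[OF dz, of _ q] unfolding R_stem_verts_iff by blast
  qed
  have "u \<notin> stem_removed V T' l" if l: "l \<in> leaves V T'" for l
  proof
    assume "u \<in> stem_removed V T' l"
    then obtain p where p: "is_path T' p" "hd p = l" "last p = u" "set p \<inter> branches V T' = {}"
      using stem_removed_path[OF moved_leaf_tree l bne'] by blast
    then have "u \<in> set p" by (metis is_path_def last_in_set)
    moreover have "set p \<inter> ((tpath T b r - {b, r}) \<union> {u}) = {}"
      using branch_free_leaf_path_avoids[OF moved_leaf_core_closed[OF dz] p(1)] p(2,4) l by simp
    ultimately show False by blast
  qed
  then have uR': "u \<in> R_stem_verts V T'" using uV by (simp add: R_stem_verts_iff)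
  have "u \<in> stem_removed V T u"
    using branch_free_path_stem_removed[OF tr u bne, of "[u]"] leaf_not_branch[OF u] by (simp add: is_path_def)
  then have "u \<notin> R_stem_verts V T" using u by (auto simp: R_stem_verts_iff)
  moreover have "finite (R_stem_verts V T')" using sg by (simp add: R_stem_verts_def simple_graph_def)
  ultimately show ?thesis using sub uR' by (metis psubset_card_mono psubsetI)
qed

end

lemma leaf_nonadj_path_neighbour:
  assumes x: "x \<in> tpath T b r - {b, r}" and w: "w \<in> tpath T b r" "{w, x} \<in> T"
    and u: "u \<in> leaves V T" and ux: "{u, x} \<in> E"
  shows "{u, w} \<notin> E"
proof
  assume uw: "{u, w} \<in> E"
  obtain z where uz: "{u, z} \<in> T" using leaf_neighbour[OF tree_simple_graph[OF tr] u] .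
  let ?T' = "move_leaf_into_edge T u z w x"
  have "?T' \<subseteq> E" using TE ux uw unfolding move_leaf_into_edge_def by auto
  then have sp: "spanning_tree V E ?T'" using is_tree_spanning_tree[OF moved_leaf_tree[OF x w u uz]] by blast
  have leaves: "leaves V ?T' \<subseteq> insert z (leaves V T - {u})" using moved_leaf_leaves[OF x w u uz] .
  show False
  proof (cases "z \<in> leaves V ?T'")
    case False
    then have "card (leaves V ?T') \<le> card (leaves V T - {u})" using leaves finL by (intro card_mono) auto
    also have "\<dots> < card (leaves V T)" using card_Diff1_less[OF finL u] .
    finally show False using leaves_min[OF sp] by simp
  next
    case True
    then have dz: "tdeg T z = 2" using moved_leaf_tdeg(2)[OF x w u uz] by (simp add: leaves_def)
    have "card (leaves V ?T') \<le> card (insert z (leaves V T - {u}))" using leaves finL by (intro card_mono) auto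
    also have "\<dots> \<le> card (leaves V T)" using card_insert_Diff1_le[OF finL u] .
    finally have "C1 V E ?T'" using sp leaves_min unfolding C1_def by (meson le_trans)
    then show False using R_stem_max moved_leaf_R_stem_grows[OF x w u uz dz] by (meson not_le)
  qed
qed

lemma path_neighbours_nonadj:
  assumes x: "x \<in> tpath T b r - {b, r}" and e: "{x, x1} \<in> T" "{x, x2} \<in> T" "x1 \<noteq> x2"
    and u: "u \<in> leaves V T" and v: "v \<in> leaves V T" "u \<noteq> v" and ux: "{u, x} \<in> E" and vx: "{v, x} \<in> E"
  shows "{x1, x2} \<notin> E"
proof
  assume x12: "{x1, x2} \<in> E"
  let ?T' = "move_vertex_onto_leaf T x x1 x2 u"
  have dx: "tdeg T x = 2" using interior_tdeg[OF x] .
  have notin: "u \<notin> tpath T b r" "v \<notin> tpath T b r" using leaf_notin_path u v by blast+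
  have nbrs: "x \<in> tpath T b r" "x1 \<in> tpath T b r" "x2 \<in> tpath T b r" using x interior_neighbour[OF x] e by auto
  then have u': "u \<notin> {x, x1, x2}" and "v \<noteq> x" using notin by auto
  have uV: "u \<in> V" and vV: "v \<in> V" and du: "tdeg T u = 1" and dv: "tdeg T v = 1"
    using u v by (auto simp: leaves_def)
  have tr': "is_tree V ?T'" using tree_move_vertex_onto_leaf[OF tr e dx uV u'] .
  have "?T' \<subseteq> E" using TE ux x12 unfolding move_vertex_onto_leaf_def by auto
  then have sp: "spanning_tree V E ?T'" using is_tree_spanning_tree[OF tr'] by blast
  note d = tdeg_move_vertex_onto_leaf[OF tr e dx u']
  have "leaves V ?T' \<subseteq> insert x (leaves V T - {u})"
  proof
    fix y assume "y \<in> leaves V ?T'"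
    then show "y \<in> insert x (leaves V T - {u})"
      using d(2) d(3)[of y] du by (cases "y \<in> {x, u}") (auto simp: leaves_def)
  qed
  then have "card (leaves V ?T') \<le> card (insert x (leaves V T - {u}))" using finL by (intro card_mono) auto
  also have "\<dots> \<le> card (leaves V T)" using card_insert_Diff1_le[OF finL u] .
  finally have le: "card (leaves V ?T') \<le> card (leaves V T)" .
  have "x \<in> leaves V ?T'" "v \<in> leaves V ?T'"
    using d(1) d(3)[of v] dv vV \<open>v \<noteq> x\<close> v(2) nbrs(1) path_in_V by (auto simp: leaves_def)
  then obtain S' where "spanning_tree V E S'" "card (leaves V S') < card (leaves V ?T')"
    using join_adjacent_leaves[OF tr' \<open>?T' \<subseteq> E\<close> _ _ \<open>v \<noteq> x\<close>[symmetric] _ noham] vx by (metis insert_commute)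
  then show False using le leaves_min by (meson le_trans not_le)
qed

lemma interior_leaf_neighbours:
  assumes K14: "K14_free V E" and x: "x \<in> tpath T b r - {b, r}"
  shows "card {l \<in> leaves V T. {x, l} \<in> E} \<le> 1"
proof (rule ccontr)
  assume "\<not> ?thesis"
  then obtain u v where u: "u \<in> leaves V T" "{x, u} \<in> E" and v: "v \<in> leaves V T" "{x, v} \<in> E"
    and uv: "u \<noteq> v"
    using finL card_le_Suc0_iff_eq[of "{l \<in> leaves V T. {x, l} \<in> E}"] by auto
  obtain x1 x2 where x12: "x1 \<in> tpath T b r" "x2 \<in> tpath T b r" "{x, x1} \<in> T" "{x, x2} \<in> T" "x1 \<noteq> x2"
    using interior_path_neighbours[OF x] .
  have notin: "u \<notin> tpath T b r" "v \<notin> tpath T b r" using leaf_notin_path u v by blast+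
  define S where "S = {x1, x2, u, v}"
  have V: "S \<subseteq> V" "x \<in> V" using path_in_V x x12 u v by (auto simp: leaves_def S_def)
  have "x1 \<noteq> u" "x1 \<noteq> v" "x2 \<noteq> u" "x2 \<noteq> v" using x12 notin by auto
  then have card: "card S = 4" using x12(5) uv by (simp add: S_def)
  have adj: "\<forall>s\<in>S. {x, s} \<in> E" using x12 u v TE by (auto simp: S_def)
  have "{u, v} \<notin> E" "{x1, x2} \<notin> E"
    using leaves_nonadj[OF u(1) v(1) uv] path_neighbours_nonadj[OF x x12(3-5) u(1) v(1) uv] u v
    by (simp_all add: insert_commute)
  moreover have "{u, x1} \<notin> E" "{u, x2} \<notin> E" "{v, x1} \<notin> E" "{v, x2} \<notin> E"
    using leaf_nonadj_path_neighbour[OF x x12(1) edge_sym[OF x12(3)]]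
      leaf_nonadj_path_neighbour[OF x x12(2) edge_sym[OF x12(4)]] u v by (simp_all add: insert_commute)
  ultimately have "\<forall>s\<in>S. \<forall>t\<in>S. s \<noteq> t \<longrightarrow> {s, t} \<notin> E" by (auto simp: S_def insert_commute)
  then show False using K14 V card adj unfolding K14_free_def by blast
qed

end

theorem claim4p4:
  fixes V :: "'a set" and E :: "'a set set" and T :: "'a set set" and b r :: 'a
  assumes "simple_graph V E"
    and "connected_on V E"
    and "K14_free V E"
    and "\<not> (\<exists>p. hamiltonian_path V E p)"
    and "C2 V E T"
    and "b \<in> branches V T" and "r \<in> branches V T"
    and "tpath T b r \<inter> branches V T = {b, r}"
  shows "\<forall>x \<in> tpath T b r - {b, r}. card {l \<in> leaves V T. {x, l} \<in> E} \<le> 1"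
proof -
  interpret extremal_spanning_tree V E T b r
    using assms by unfold_locales auto
  show ?thesis using interior_leaf_neighbours[OF assms(3)] by blast
qed

end
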